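(* Let $0<\lambda<1$, $0<\beta<1$, and put $D=-3\lambda^2+4\beta^2+4\lambda-4\beta$. (1) If $(\lambda,\beta)\in P$, then the set of nonzero idempotents of $\mathcal{B}'(\lambda,\beta)$ is $\{o,\ a,\ b,\ o+(1-2\lambda)a,\ o+(1-2\lambda)b\}$. (2) If $(\lambda,\beta)\notin P$ (equivalently $D\neq 0$), then the set of nonzero idempotents of $\mathcal{B}'(\lambda,\beta)$ is $\{o,\ a,\ b,\ o+(1-2\lambda)a,\ o+(1-2\lambda)b,\ j_0,\ j_1\}\setminus\{0\}$, where for $\varepsilon\in\{0,1\}$ $$j_\varepsilon=\varepsilon\, o+\frac{\lambda(1-2\varepsilon\lambda)}{D}(2\beta-\lambda)\,a+\frac{\lambda(1-2\varepsilon\lambda)}{D}(2-2\beta-\lambda)\,b+2\Big(\frac{\lambda(1-2\varepsilon\lambda)}{D}\Big)^2(2\beta-\lambda)(2-2\beta-\lambda)\,c.$$ (Elements in these lists may coincide for special parameter values.)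
   Context: For real parameters $0<\lambda<1$ and $0<\beta<1$, $\mathcal{B}'(\lambda,\beta)$ denotes the commutative (non-associative) $4$-dimensional real algebra with basis $\{o,a,b,c\}$ whose bilinear commutative multiplication $\circ$ is determined by $o\circ o=o$, $o\circ a=\lambda a$, $o\circ b=\lambda b$, $a\circ a=a$, $b\circ b=b$, $a\circ b=\frac{\lambda-\beta}{\lambda}a+\frac{\lambda+\beta-1}{\lambda}b+c$, and $c\circ x=x\circ c=0$ for every $x$. (In the paper the basis vector $c$ is written $ab$.) An element $x$ is idempotent if $x\circ x=x$. The set $P$ is $P=\{(\lambda,\beta)\mid 0<\lambda\le \tfrac13,\ \beta=\tfrac12\big(1\pm\sqrt{(1-\lambda)(1-3\lambda)}\big)\}$; for $0<\lambda<1$, $0<\beta<1$ one has $(\lambda,\beta)\in P$ iff $-3\lambda^2+4\beta^2+4\lambda-4\beta=0$. *)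

theory Defs
  imports Complex_Main
begin

text \<open>Basis of the 4-dimensional algebra B'(lambda,beta): o, a, b, c (c is written ab in the paper).
  Elements are coordinate functions bas => real.\<close>

datatype bas = Bo | Ba | Bb | Bc

type_synonym elt = "bas \<Rightarrow> real"

definition mk :: "real \<Rightarrow> real \<Rightarrow> real \<Rightarrow> real \<Rightarrow> elt" where
  "mk x0 x1 x2 x3 = (\<lambda>k. case k of Bo \<Rightarrow> x0 | Ba \<Rightarrow> x1 | Bb \<Rightarrow> x2 | Bc \<Rightarrow> x3)"

definition zeroE :: elt where "zeroE = mk 0 0 0 0"

fun table :: "real \<Rightarrow> real \<Rightarrow> bas \<Rightarrow> bas \<Rightarrow> elt" where
  "table l be Bo Bo = mk 1 0 0 0"
| "table l be Bo Ba = mk 0 l 0 0"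
| "table l be Ba Bo = mk 0 l 0 0"
| "table l be Bo Bb = mk 0 0 l 0"
| "table l be Bb Bo = mk 0 0 l 0"
| "table l be Ba Ba = mk 0 1 0 0"
| "table l be Bb Bb = mk 0 0 1 0"
| "table l be Ba Bb = mk 0 ((l - be) / l) ((l + be - 1) / l) 1"
| "table l be Bb Ba = mk 0 ((l - be) / l) ((l + be - 1) / l) 1"
| "table l be Bc x = zeroE"
| "table l be x Bc = zeroE"

definition mult :: "real \<Rightarrow> real \<Rightarrow> elt \<Rightarrow> elt \<Rightarrow> elt" where
  "mult l be x y = (\<lambda>k. \<Sum>i\<in>{Bo,Ba,Bb,Bc}. \<Sum>j\<in>{Bo,Ba,Bb,Bc}. x i * y j * table l be i j k)"

definition nonzero_idempotents :: "real \<Rightarrow> real \<Rightarrow> elt set" where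
  "nonzero_idempotents l be = {x. x \<noteq> zeroE \<and> mult l be x x = x}"

definition P_set :: "(real \<times> real) set" where
  "P_set = {(l, be). 0 < l \<and> l \<le> 1/3 \<and>
      (be = (1 + sqrt ((1 - l) * (1 - 3*l))) / 2 \<or> be = (1 - sqrt ((1 - l) * (1 - 3*l))) / 2)}"

definition Dval :: "real \<Rightarrow> real \<Rightarrow> real" where
  "Dval l be = -3*l^2 + 4*be^2 + 4*l - 4*be"

definition jeps :: "real \<Rightarrow> real \<Rightarrow> real \<Rightarrow> elt" where
  "jeps l be e = (let t = l * (1 - 2*e*l) / Dval l be in
     mk e (t * (2*be - l)) (t * (2 - 2*be - l)) (2 * t^2 * (2*be - l) * (2 - 2*be - l)))"

end

theory Submission imports Defs begin

(* Writing x = a o + b a + c b + d c (coordinates a,b,c,d),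
   the square of x has the explicit coordinates computed in mult_mk_square, so that
   x is idempotent iff a^2 = a, d = 2bc and
     b (l b + 2 (l - be) c - s) = 0,   c (2 (l + be - 1) b + l c - s) = 0,
   where s = l (1 - 2 l a)  (lemma idempotent_iff).  If b = 0 or c = 0 the remaining
   equation is a one-variable quadratic and yields 0, o, a, b, o + (1-2l) a, o + (1-2l) b.
   If b, c are both nonzero, (b, c) solves a 2x2 linear system whose determinant is
   exactly D = Dval l be; Cramer's rule forces b, c to be the coordinates of j_a, and
   D = 0 is impossible (lemma mixed_solution_Dval_nonzero).  Conversely every j_e is
   idempotent when D <> 0.  Finally (l,be) \<in> P iff D = 0 (lemma P_set_iff_Dval_zero),
   and the theorem follows by combining the classification with these facts. *)

lemma mk_apply [simp]:
  "mk a b c d Bo = a" "mk a b c d Ba = b" "mk a b c d Bb = c" "mk a b c d Bc = d"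
  by (simp_all add: mk_def)

lemma mk_eq_iff: "mk a b c d = mk a' b' c' d' \<longleftrightarrow> a = a' \<and> b = b' \<and> c = c' \<and> d = d'"
proof
  assume h: "mk a b c d = mk a' b' c' d'"
  show "a = a' \<and> b = b' \<and> c = c' \<and> d = d'"
    using fun_cong[OF h, of Bo] fun_cong[OF h, of Ba] fun_cong[OF h, of Bb] fun_cong[OF h, of Bc]
    by simp
qed simp

lemma mk_coordinates: "mk (x Bo) (x Ba) (x Bb) (x Bc) = x"
  by (rule ext, case_tac xa) simp_all

lemma zeroE_eq_mk: "zeroE = mk 0 0 0 0"
  by (simp add: zeroE_def)

lemma mult_mk_square:
  "mult l be (mk a b c d) (mk a b c d) =
     mk (a^2) (2*l*a*b + b^2 + 2*b*c*((l - be)/l)) (2*l*a*c + c^2 + 2*b*c*((l + be - 1)/l)) (2*b*c)"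
  by (rule ext, case_tac x)
     (simp_all add: mult_def zeroE_def mk_def algebra_simps power2_eq_square)

text \<open>Clearing the denominator l, idempotence becomes four polynomial equations.\<close>
lemma idempotent_iff:
  assumes "l \<noteq> 0"
  shows "mult l be (mk a b c d) (mk a b c d) = mk a b c d \<longleftrightarrow>
           a^2 = a \<and> d = 2*b*c
           \<and> b * (l*b + 2*(l - be)*c - l*(1 - 2*l*a)) = 0
           \<and> c * (2*(l + be - 1)*b + l*c - l*(1 - 2*l*a)) = 0"
  using assms unfolding mult_mk_square mk_eq_iff
  by (auto simp: field_simps power2_eq_square)

text \<open>The determinant of the linear system for the mixed coordinates (b, c) is D;
  Cramer's rule gives its solutions.\<close>
lemma cramer_mixed:
  assumes "l*b + 2*(l - be)*c = s" and "2*(l + be - 1)*b + l*c = s"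
  shows "Dval l be * b = s*(2*be - l)" and "Dval l be * c = s*(2 - 2*be - l)"
proof -
  have "Dval l be * b - s*(2*be - l) =
          l*(l*b + 2*(l - be)*c - s) - 2*(l - be)*(2*(l + be - 1)*b + l*c - s)"
    by (simp add: Dval_def algebra_simps power2_eq_square)
  then show "Dval l be * b = s*(2*be - l)" using assms by simp
  have "Dval l be * c - s*(2 - 2*be - l) =
          l*(2*(l + be - 1)*b + l*c - s) - 2*(l + be - 1)*(l*b + 2*(l - be)*c - s)"
    by (simp add: Dval_def algebra_simps power2_eq_square)
  then show "Dval l be * c = s*(2 - 2*be - l)" using assms by simp
qed

lemma cramer_solution:
  assumes D: "Dval l be \<noteq> 0" and t: "t = s / Dval l be"
  shows "l*(t*(2*be - l)) + 2*(l - be)*(t*(2 - 2*be - l)) = s"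
    and "2*(l + be - 1)*(t*(2*be - l)) + l*(t*(2 - 2*be - l)) = s"
proof -
  have tD: "t * Dval l be = s" using D t by simp
  have "l*(t*(2*be - l)) + 2*(l - be)*(t*(2 - 2*be - l)) = t * Dval l be"
    by (simp add: Dval_def algebra_simps power2_eq_square)
  then show "l*(t*(2*be - l)) + 2*(l - be)*(t*(2 - 2*be - l)) = s" using tD by simp
  have "2*(l + be - 1)*(t*(2*be - l)) + l*(t*(2 - 2*be - l)) = t * Dval l be"
    by (simp add: Dval_def algebra_simps power2_eq_square)
  then show "2*(l + be - 1)*(t*(2*be - l)) + l*(t*(2 - 2*be - l)) = s" using tD by simp
qed

text \<open>At l = 1/2 the determinant is (2 be - 1)^2 + 1/4, never zero.\<close>
lemma Dval_half_pos: "Dval (1/2) be > 0"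
proof -
  have "Dval (1/2) be = (2*be - 1)^2 + 1/4"
    by (simp add: Dval_def power2_eq_square algebra_simps)
  then show ?thesis by (simp add: add_nonneg_pos)
qed

lemma mixed_solution_Dval_nonzero:
  assumes l: "0 < l" "l < 1" and a: "a = 0 \<or> a = 1" and bc: "b \<noteq> 0" "c \<noteq> 0"
    and sys: "l*b + 2*(l - be)*c = l*(1 - 2*l*a)" "2*(l + be - 1)*b + l*c = l*(1 - 2*l*a)"
  shows "Dval l be \<noteq> 0"
proof
  assume D0: "Dval l be = 0"
  show False
  proof (cases "1 - 2*l*a = 0")
    case True
    then have "l = 1/2" using a by auto
    then have "Dval l be > 0" by (simp only: Dval_half_pos)
    then show False using D0 by simp
  next
    case False
    have "l*(1 - 2*l*a)*(2*be - l) = 0" "l*(1 - 2*l*a)*(2 - 2*be - l) = 0"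
      using cramer_mixed[OF sys] D0 by simp_all
    then have "2*be - l = 0" "2 - 2*be - l = 0" using False l by auto
    then show False using l by simp
  qed
qed

definition axis_idempotents :: "real \<Rightarrow> elt set" where
  "axis_idempotents l =
     {mk 1 0 0 0, mk 0 1 0 0, mk 0 0 1 0, mk 1 (1 - 2*l) 0 0, mk 1 0 (1 - 2*l) 0}"

lemma axis_idempotents_nonzero_idempotents:
  assumes "0 < l"
  shows "axis_idempotents l \<subseteq> nonzero_idempotents l be"
  using assms
  by (auto simp: axis_idempotents_def nonzero_idempotents_def idempotent_iff zeroE_eq_mk
                 mk_eq_iff power2_eq_square algebra_simps)

lemma jeps_idempotent:
  assumes l: "0 < l" and D: "Dval l be \<noteq> 0" and e: "e = 0 \<or> e = 1"
  shows "mult l be (jeps l be e) (jeps l be e) = jeps l be e"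
proof -
  define t where "t = l*(1 - 2*e*l) / Dval l be"
  have j: "jeps l be e = mk e (t*(2*be - l)) (t*(2 - 2*be - l)) (2*t^2*(2*be - l)*(2 - 2*be - l))"
    by (simp add: jeps_def t_def Let_def)
  have sol: "l*(t*(2*be - l)) + 2*(l - be)*(t*(2 - 2*be - l)) = l*(1 - 2*l*e)"
            "2*(l + be - 1)*(t*(2*be - l)) + l*(t*(2 - 2*be - l)) = l*(1 - 2*l*e)"
    using cramer_solution[OF D, of t "l*(1 - 2*l*e)"] by (simp_all add: t_def mult.commute)
  show ?thesis
    unfolding j idempotent_iff[OF less_imp_neq[OF l, symmetric]]
    using e sol by (auto simp: power2_eq_square)
qed

lemma idempotent_classification:
  assumes l: "0 < l" "l < 1" and idem: "mult l be x x = x"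
  shows "x = zeroE \<or> x \<in> axis_idempotents l
         \<or> (Dval l be \<noteq> 0 \<and> (x = jeps l be 0 \<or> x = jeps l be 1))"
proof -
  obtain a b c d where x: "x = mk a b c d"
    using mk_coordinates[of x] by metis
  define s where "s = l*(1 - 2*l*a)"
  have sys: "a^2 = a" "d = 2*b*c" "b * (l*b + 2*(l - be)*c - s) = 0"
            "c * (2*(l + be - 1)*b + l*c - s) = 0"
    using idem l unfolding x s_def by (simp_all add: idempotent_iff)
  have a: "a = 0 \<or> a = 1"
    using sys(1) by (simp add: power2_eq_square)
  consider "b = 0" | "c = 0" | "b \<noteq> 0" "c \<noteq> 0" by blast
  then show ?thesis
  proof cases
    case 1
    then have "c = 0 \<or> c = 1 - 2*l*a" using sys(4) l by (auto simp: s_def)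
    then show ?thesis
      using 1 a sys(2) by (auto simp: x zeroE_eq_mk axis_idempotents_def)
  next
    case 2
    then have "b = 0 \<or> b = 1 - 2*l*a" using sys(3) l by (auto simp: s_def)
    then show ?thesis
      using 2 a sys(2) by (auto simp: x zeroE_eq_mk axis_idempotents_def)
  next
    case 3
    have lin: "l*b + 2*(l - be)*c = s" "2*(l + be - 1)*b + l*c = s"
      using 3 sys(3,4) by simp_all
    have D: "Dval l be \<noteq> 0"
      using mixed_solution_Dval_nonzero[OF l a 3] lin by (simp add: s_def)
    define t where "t = l*(1 - 2*a*l) / Dval l be"
    have "b = t*(2*be - l)" "c = t*(2 - 2*be - l)"
      using cramer_mixed[OF lin] D by (simp_all add: t_def s_def field_simps)
    then have "x = jeps l be a"
      using sys(2) by (simp add: x jeps_def Let_def t_def[symmetric] mk_eq_iff power2_eq_square)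
    then show ?thesis using a D by auto
  qed
qed

lemma nonzero_idempotents_eq:
  assumes l: "0 < l" "l < 1"
  shows "nonzero_idempotents l be =
           axis_idempotents l \<union> (if Dval l be = 0 then {} else {jeps l be 0, jeps l be 1} - {zeroE})"
    (is "?N = ?R")
proof
  show "?N \<subseteq> ?R"
    using idempotent_classification[OF l] by (auto simp: nonzero_idempotents_def)
  show "?R \<subseteq> ?N"
    using axis_idempotents_nonzero_idempotents[OF l(1)] jeps_idempotent[OF l(1)]
    by (auto simp: nonzero_idempotents_def)
qed

lemma zeroE_notin_axis_idempotents: "zeroE \<notin> axis_idempotents l"
  by (auto simp: axis_idempotents_def zeroE_eq_mk mk_eq_iff)

text \<open>(l, be) \<in> P says 2 be - 1 = \<plusminus>sqrt((1-l)(1-3l)), i.e. (2 be - 1)^2 = (1-l)(1-3l),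
  which is D = 0; the restriction l \<le> 1/3 is then automatic.\<close>
lemma P_set_iff_Dval_zero:
  assumes l: "0 < l" "l < 1"
  shows "(l, be) \<in> P_set \<longleftrightarrow> Dval l be = 0"
proof -
  have D: "Dval l be = 0 \<longleftrightarrow> (2*be - 1)^2 = (1 - l)*(1 - 3*l)"
    by (auto simp: Dval_def power2_eq_square algebra_simps)
  show ?thesis
  proof
    assume "(l, be) \<in> P_set"
    then have "l \<le> 1/3" and "2*be - 1 = sqrt ((1 - l)*(1 - 3*l)) \<or> 2*be - 1 = - sqrt ((1 - l)*(1 - 3*l))"
      by (auto simp: P_set_def)
    moreover have "0 \<le> (1 - l)*(1 - 3*l)" using \<open>l \<le> 1/3\<close> l by simp
    ultimately show "Dval l be = 0" unfolding D by auto
  next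
    assume "Dval l be = 0"
    then have sq: "(2*be - 1)^2 = (1 - l)*(1 - 3*l)" unfolding D .
    have "l \<le> 1/3"
    proof (rule ccontr)
      assume "\<not> l \<le> 1/3"
      then have "(1 - l)*(1 - 3*l) < 0" using l by (intro mult_pos_neg) auto
      then show False using sq by (metis not_less zero_le_power2)
    qed
    moreover have "sqrt ((1 - l)*(1 - 3*l)) = \<bar>2*be - 1\<bar>"
      using sq by (metis real_sqrt_abs)
    ultimately show "(l, be) \<in> P_set"
      using l by (auto simp: P_set_def abs_if)
  qed
qed

theorem mainTheorem2:
  fixes l be :: real
  assumes "0 < l" "l < 1" "0 < be" "be < 1"
  shows "((l, be) \<in> P_set \<longrightarrow>
           nonzero_idempotents l be =
             {mk 1 0 0 0, mk 0 1 0 0, mk 0 0 1 0, mk 1 (1 - 2*l) 0 0, mk 1 0 (1 - 2*l) 0})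
       \<and> ((l, be) \<notin> P_set \<longrightarrow>
           nonzero_idempotents l be =
             {mk 1 0 0 0, mk 0 1 0 0, mk 0 0 1 0, mk 1 (1 - 2*l) 0 0, mk 1 0 (1 - 2*l) 0,
              jeps l be 0, jeps l be 1} - {zeroE})"
proof -
  have N: "nonzero_idempotents l be =
             axis_idempotents l \<union> (if Dval l be = 0 then {} else {jeps l be 0, jeps l be 1} - {zeroE})"
    using nonzero_idempotents_eq assms(1,2) .
  have "axis_idempotents l \<union> ({jeps l be 0, jeps l be 1} - {zeroE})
          = (axis_idempotents l \<union> {jeps l be 0, jeps l be 1}) - {zeroE}"
    using zeroE_notin_axis_idempotents by blast
  then show ?thesis
    using N P_set_iff_Dval_zero[OF assms(1,2)]
    by (auto simp: axis_idempotents_def insert_commute)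
qed

end
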